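(* Let $G$ be a group, let $k\geqslant 1$ and $\alpha,\beta>0$. Suppose $U$ is a $k$-approximate group in $G$ satisfying $|U^n|\geqslant(\alpha|U|)^{\beta n}$ for every $n\in\mathbb{N}$. Then $|U|\leqslant k^{\lceil 2/\beta\rceil-1}/\alpha^2$.
   Context: A finite symmetric subset $U\subset G$ is a $k$-approximate group if there is a finite subset $X\subset G$ with $|X|\leqslant k$ and $U^2\subset XU$. Here $U^n=\{u_1\cdots u_n:u_i\in U\}$. *)

theory Defs
  imports Complex_Main "HOL-Algebra.Coset"
begin

fun set_pow :: "('a, 'b) monoid_scheme \<Rightarrow> 'a set \<Rightarrow> nat \<Rightarrow> 'a set" where
  "set_pow G U 0 = {\<one>\<^bsub>G\<^esub>}"
| "set_pow G U (Suc n) = set_pow G U n <#>\<^bsub>G\<^esub> U"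

definition approx_group :: "('a, 'b) monoid_scheme \<Rightarrow> real \<Rightarrow> 'a set \<Rightarrow> bool" where
  "approx_group G k U \<longleftrightarrow>
     U \<subseteq> carrier G \<and> finite U \<and> (\<forall>u\<in>U. inv\<^bsub>G\<^esub> u \<in> U) \<and>
     (\<exists>X. X \<subseteq> carrier G \<and> finite X \<and> real (card X) \<le> k \<and>
          set_pow G U 2 \<subseteq> X <#>\<^bsub>G\<^esub> U)"

end

theory Submission
  imports Defs
begin

text \<open>Covering \<open>U\<^sup>2\<close> by \<open>k\<close> translates \<open>XU\<close> gives \<open>U\<^bsup>n+1\<^esup> \<subseteq> X\<^sup>n U\<close>, hence
  \<open>|U\<^bsup>n+1\<^esup>| \<le> k\<^sup>n |U|\<close>. For \<open>m = \<lceil>2/\<beta>\<rceil>\<close> the growth hypothesis then gives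
  \<open>(\<alpha>|U|)\<^sup>2 \<le> (\<alpha>|U|)\<^bsup>\<beta>m\<^esup> \<le> k\<^bsup>m-1\<^esup> |U|\<close> as soon as \<open>\<alpha>|U| \<ge> 1\<close>; otherwise
  \<open>|U| < 1/\<alpha> \<le> 1/\<alpha>\<^sup>2\<close>, since \<open>|U| \<ge> 1\<close> forces \<open>\<alpha> < 1\<close>.\<close>

lemma card_set_mult_le:
  assumes "finite A" "finite B"
  shows "card (A <#>\<^bsub>G\<^esub> B) \<le> card A * card B"
proof -
  have "A <#>\<^bsub>G\<^esub> B = (\<lambda>(a, b). a \<otimes>\<^bsub>G\<^esub> b) ` (A \<times> B)"
    unfolding set_mult_def by auto
  also have "card \<dots> \<le> card (A \<times> B)"
    using assms by (intro card_image_le) simp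
  finally show ?thesis
    by (simp add: card_cartesian_product)
qed

lemma finite_set_pow: "finite U \<Longrightarrow> finite (set_pow G U n)"
  by (induction n) (auto simp: set_mult_def)

lemma card_set_pow_le:
  assumes "finite U"
  shows "card (set_pow G U n) \<le> card U ^ n"
proof (induction n)
  case 0
  then show ?case by simp
next
  case (Suc n)
  have "card (set_pow G U (Suc n)) \<le> card (set_pow G U n) * card U"
    using card_set_mult_le[OF finite_set_pow[OF assms] assms] by simp
  also have "\<dots> \<le> card U ^ n * card U"
    using Suc.IH by simp
  finally show ?case
    by (simp add: mult.commute)
qed

lemma (in monoid) set_pow_closed: "U \<subseteq> carrier G \<Longrightarrow> set_pow G U n \<subseteq> carrier G"
  by (induction n) (simp_all add: set_mult_closed)

lemma (in monoid) set_pow_one: "U \<subseteq> carrier G \<Longrightarrow> set_pow G U 1 = U"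
  by (force simp: set_mult_def)

lemma (in group) set_pow_Suc_subset:
  assumes U: "U \<subseteq> carrier G" and X: "X \<subseteq> carrier G"
    and cover: "set_pow G U 2 \<subseteq> X <#> U"
  shows "set_pow G U (Suc n) \<subseteq> set_pow G X n <#> U"
proof (induction n)
  case 0
  show ?case
    using set_pow_one[OF U] by simp
next
  case (Suc n)
  have Xn: "set_pow G X n \<subseteq> carrier G"
    using set_pow_closed[OF X] .
  have UU: "U <#> U \<subseteq> X <#> U"
    using cover set_pow_one[OF U] by (simp add: numeral_2_eq_2)
  have "set_pow G U (Suc (Suc n)) \<subseteq> (set_pow G X n <#> U) <#> U"
    using Suc.IH by (simp add: mono_set_mult)
  also have "\<dots> = set_pow G X n <#> (U <#> U)"
    using set_mult_assoc[OF Xn U U] .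
  also have "\<dots> \<subseteq> set_pow G X n <#> (X <#> U)"
    using UU by (simp add: mono_set_mult)
  also have "\<dots> = set_pow G X (Suc n) <#> U"
    using set_mult_assoc[OF Xn X U] by simp
  finally show ?case .
qed

lemma approx_group_card_set_pow_Suc_le:
  assumes "group G" and "approx_group G k U"
  shows "real (card (set_pow G U (Suc n))) \<le> k ^ n * real (card U)"
proof -
  interpret group G by fact
  obtain X where U: "U \<subseteq> carrier G" "finite U"
    and X: "X \<subseteq> carrier G" "finite X" "real (card X) \<le> k" "set_pow G U 2 \<subseteq> X <#>\<^bsub>G\<^esub> U"
    using assms(2) unfolding approx_group_def by blast
  have "card (set_pow G U (Suc n)) \<le> card (set_pow G X n <#>\<^bsub>G\<^esub> U)"
    using set_pow_Suc_subset[OF U(1) X(1) X(4)]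
    by (rule card_mono[rotated]) (simp add: finite_set_pow X(2) U(2) set_mult_def)
  also have "\<dots> \<le> card (set_pow G X n) * card U"
    using card_set_mult_le[OF finite_set_pow[OF X(2)] U(2)] .
  also have "\<dots> \<le> card X ^ n * card U"
    using card_set_pow_le[OF X(2)] by (rule mult_right_mono) simp
  finally have "real (card (set_pow G U (Suc n))) \<le> real (card X) ^ n * real (card U)"
    by (metis of_nat_le_iff of_nat_mult of_nat_power)
  also have "\<dots> \<le> k ^ n * real (card U)"
    using X(3) by (intro mult_right_mono power_mono) auto
  finally show ?thesis .
qed

lemma le_divide_square_if_powr_le:
  fixes \<alpha> e K :: real and c :: nat
  assumes "\<alpha> > 0" and "e \<ge> 2" and "K \<ge> 1"
    and growth: "(\<alpha> * c) powr e \<le> K * c"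
  shows "c \<le> K / \<alpha>\<^sup>2"
proof (cases "\<alpha> * c \<le> 1")
  case small: True
  show ?thesis
  proof (cases "c = 0")
    case True
    then show ?thesis
      using assms by simp
  next
    case False
    then have "\<alpha> * 1 \<le> \<alpha> * c"
      using \<open>\<alpha> > 0\<close> by (intro mult_left_mono) auto
    then have "\<alpha> \<le> 1"
      using small by simp
    have "c \<le> 1 / \<alpha>"
      using small \<open>\<alpha> > 0\<close> by (simp add: field_simps mult.commute)
    also have "\<dots> \<le> 1 / \<alpha>\<^sup>2"
      using \<open>\<alpha> \<le> 1\<close> \<open>\<alpha> > 0\<close> by (simp add: field_simps power2_eq_square mult_le_cancel_left1)
    also have "\<dots> \<le> K / \<alpha>\<^sup>2"
      using \<open>K \<ge> 1\<close> \<open>\<alpha> > 0\<close> by (simp add: divide_right_mono)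
    finally show ?thesis .
  qed
next
  case large: False
  then have "c > 0"
    by (metis mult_zero_right of_nat_0 not_gr0 zero_le_one)
  have "(\<alpha> * c)\<^sup>2 = (\<alpha> * c) powr 2"
    using large by (simp add: powr_realpow)
  also have "\<dots> \<le> (\<alpha> * c) powr e"
    using large \<open>e \<ge> 2\<close> by (intro powr_mono) auto
  also have "\<dots> \<le> K * c"
    by (fact growth)
  finally have "(\<alpha>\<^sup>2 * c) * c \<le> K * c"
    by (simp add: power2_eq_square algebra_simps)
  then have "\<alpha>\<^sup>2 * c \<le> K"
    using \<open>c > 0\<close> by simp
  then show ?thesis
    using \<open>\<alpha> > 0\<close> by (simp add: field_simps)
qed

theorem proposition2p13:
  fixes G :: "('a, 'b) monoid_scheme" and k \<alpha> \<beta> :: real and U :: "'a set"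
  assumes "group G" and "k \<ge> 1" and "\<alpha> > 0" and "\<beta> > 0"
    and "approx_group G k U"
    and "\<And>n::nat. real (card (set_pow G U n)) \<ge> (\<alpha> * real (card U)) powr (\<beta> * real n)"
  shows "real (card U) \<le> k ^ nat (\<lceil>2 / \<beta>\<rceil> - 1) / \<alpha> ^ 2"
proof -
  define m where "m = nat (\<lceil>2 / \<beta>\<rceil> - 1)"
  have "real (Suc m) \<ge> 2 / \<beta>"
    unfolding m_def by linarith
  then have "\<beta> * real (Suc m) \<ge> 2"
    using \<open>\<beta> > 0\<close> by (simp add: field_simps)
  moreover have "(\<alpha> * real (card U)) powr (\<beta> * real (Suc m)) \<le> k ^ m * real (card U)"
    using assms(6)[of "Suc m"] approx_group_card_set_pow_Suc_le[OF assms(1,5)] by (rule order_trans)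
  ultimately show ?thesis
    unfolding m_def[symmetric] using assms(2,3) by (intro le_divide_square_if_powr_le) auto
qed

end
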